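(* Let $G$ be a countably infinite discrete group with enumeration $\{g_n\}_{n\in\mathbb{N}}$, let $\pi$ be a unitary representation of $G$ on an infinite dimensional Hilbert space, and let $(H,\pi)$ be a model of $IHS_\pi$. Put $U_n=\pi(g_n)$ and let $\mathcal{A}$ be the $C^*$-algebra generated by $\{U_n\}_{n\in\mathbb{N}}$ (the operator-norm closure of the $*$-algebra they generate). Then every operator in $\mathcal{A}$ is definable in the language $\mathcal{L}_\pi$.
   Context: Hilbert spaces are metric structures in continuous logic in the language $\mathcal{L}=\{0,-,\dot 2,\frac{x+y}{2}, e^{i\theta}:\theta\in 2\pi\mathbb{Q}\}$; $\mathcal{L}_\pi=\mathcal{L}\cup\{\pi(g):g\in G\}$ with each $\pi(g)$ a unary function symbol interpreted as the unitary $\pi(g)$; $IHS_\pi$ is the complete $\mathcal{L}_\pi$-theory of the given representation. *)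

theory Defs
  imports "HOL-Analysis.Analysis" "HOL-Library.Countable"
begin

text \<open>A complex Hilbert space is represented as a real Hilbert space
(class real_inner + complete_space) together with a map J (multiplication by i)
which is real-linear, satisfies J (J x) = - x and preserves the real inner product.\<close>

definition complex_structure :: "('h::real_inner \<Rightarrow> 'h) \<Rightarrow> bool" where
  "complex_structure J \<longleftrightarrow> linear J \<and> (\<forall>x. J (J x) = - x) \<and>
     (\<forall>x y. inner (J x) (J y) = inner x y)"

definition cscale :: "('h::real_vector \<Rightarrow> 'h) \<Rightarrow> complex \<Rightarrow> 'h \<Rightarrow> 'h" where
  "cscale J c x = Re c *\<^sub>R x + Im c *\<^sub>R J x"

text \<open>Unitary representation of a group (written additively, as the type class
group_add; not assumed commutative) on the complex Hilbert space (h, J).\<close>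

definition unitary_rep :: "('h::real_normed_vector \<Rightarrow> 'h) \<Rightarrow> ('g::group_add \<Rightarrow> 'h \<Rightarrow> 'h) \<Rightarrow> bool" where
  "unitary_rep J \<pi> \<longleftrightarrow> \<pi> 0 = id \<and> (\<forall>a b. \<pi> (a + b) = \<pi> a \<circ> \<pi> b) \<and>
     (\<forall>h. linear (\<pi> h) \<and> (\<forall>x. \<pi> h (J x) = J (\<pi> h x)) \<and>
          (\<forall>x. norm (\<pi> h x) = norm x) \<and> surj (\<pi> h))"

definition infinite_dimensional :: "'h::real_vector itself \<Rightarrow> bool" where
  "infinite_dimensional _ \<longleftrightarrow> \<not> (\<exists>B::'h set. finite B \<and> span B = UNIV)"

datatype 'g trm = Var nat | Zero | Neg "'g trm" | Dbl "'g trm" | Mid "'g trm" "'g trm"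
  | Rot rat "'g trm" | Act 'g "'g trm"

text \<open>Formulas: atomic d(t,u); unary and binary continuous connectives
(which generate all continuous connectives up to uniform approximation);
sup / inf of a variable over the ball of radius r (the sorts of the
many-sorted Hilbert space structure are the balls of radius r).\<close>

datatype 'g fml = Dist "'g trm" "'g trm"
  | Conn1 "real \<Rightarrow> real" "'g fml"
  | Conn2 "real \<Rightarrow> real \<Rightarrow> real" "'g fml" "'g fml"
  | SupB nat nat "'g fml"
  | InfB nat nat "'g fml"

fun tfv :: "'g trm \<Rightarrow> nat set" where
  "tfv (Var n) = {n}"
| "tfv Zero = {}"
| "tfv (Neg t) = tfv t"
| "tfv (Dbl t) = tfv t"
| "tfv (Mid t u) = tfv t \<union> tfv u"
| "tfv (Rot q t) = tfv t"
| "tfv (Act g t) = tfv t"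

fun ffv :: "'g fml \<Rightarrow> nat set" where
  "ffv (Dist t u) = tfv t \<union> tfv u"
| "ffv (Conn1 f \<phi>) = ffv \<phi>"
| "ffv (Conn2 f \<phi> \<psi>) = ffv \<phi> \<union> ffv \<psi>"
| "ffv (SupB i r \<phi>) = ffv \<phi> - {i}"
| "ffv (InfB i r \<phi>) = ffv \<phi> - {i}"

fun wf_fml :: "'g fml \<Rightarrow> bool" where
  "wf_fml (Dist t u) = True"
| "wf_fml (Conn1 f \<phi>) = (continuous_on UNIV f \<and> wf_fml \<phi>)"
| "wf_fml (Conn2 f \<phi> \<psi>) = (continuous_on UNIV (\<lambda>p. f (fst p) (snd p)) \<and> wf_fml \<phi> \<and> wf_fml \<psi>)"
| "wf_fml (SupB i r \<phi>) = wf_fml \<phi>"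
| "wf_fml (InfB i r \<phi>) = wf_fml \<phi>"

definition sentence :: "'g fml \<Rightarrow> bool" where
  "sentence \<phi> \<longleftrightarrow> wf_fml \<phi> \<and> ffv \<phi> = {}"

fun teval :: "('h::real_vector \<Rightarrow> 'h) \<Rightarrow> ('g \<Rightarrow> 'h \<Rightarrow> 'h) \<Rightarrow> (nat \<Rightarrow> 'h) \<Rightarrow> 'g trm \<Rightarrow> 'h" where
  "teval J \<pi> a (Var n) = a n"
| "teval J \<pi> a Zero = 0"
| "teval J \<pi> a (Neg t) = - teval J \<pi> a t"
| "teval J \<pi> a (Dbl t) = 2 *\<^sub>R teval J \<pi> a t"
| "teval J \<pi> a (Mid t u) = (1/2) *\<^sub>R (teval J \<pi> a t + teval J \<pi> a u)"
| "teval J \<pi> a (Rot q t) = cscale J (cis (2 * pi * real_of_rat q)) (teval J \<pi> a t)"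
| "teval J \<pi> a (Act g t) = \<pi> g (teval J \<pi> a t)"

fun feval :: "('h::real_normed_vector \<Rightarrow> 'h) \<Rightarrow> ('g \<Rightarrow> 'h \<Rightarrow> 'h) \<Rightarrow> (nat \<Rightarrow> 'h) \<Rightarrow> 'g fml \<Rightarrow> real" where
  "feval J \<pi> a (Dist t u) = dist (teval J \<pi> a t) (teval J \<pi> a u)"
| "feval J \<pi> a (Conn1 f \<phi>) = f (feval J \<pi> a \<phi>)"
| "feval J \<pi> a (Conn2 f \<phi> \<psi>) = f (feval J \<pi> a \<phi>) (feval J \<pi> a \<psi>)"
| "feval J \<pi> a (SupB i r \<phi>) = (SUP x\<in>cball 0 (real r). feval J \<pi> (a(i := x)) \<phi>)"
| "feval J \<pi> a (InfB i r \<phi>) = (INF x\<in>cball 0 (real r). feval J \<pi> (a(i := x)) \<phi>)"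

text \<open>(H, pi) is a model of IHS_pi0, the complete theory of (H0, pi0):
every sentence with value 0 in (H0, pi0) has value 0 in (H, pi).\<close>

definition models_theory_of ::
  "('b::real_normed_vector \<Rightarrow> 'b) \<Rightarrow> ('g \<Rightarrow> 'b \<Rightarrow> 'b) \<Rightarrow>
   ('a::real_normed_vector \<Rightarrow> 'a) \<Rightarrow> ('g \<Rightarrow> 'a \<Rightarrow> 'a) \<Rightarrow> bool" where
  "models_theory_of J \<pi> J0 \<pi>0 \<longleftrightarrow>
     (\<forall>\<phi>. sentence \<phi> \<longrightarrow> (\<forall>a0. feval J0 \<pi>0 a0 \<phi> = 0) \<longrightarrow> (\<forall>a. feval J \<pi> a \<phi> = 0))"

text \<open>Definable function (over the empty set): on each ball of radius r it maps
into some ball of radius s, and the predicate d(T x, y) on ball_r x ball_s is a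
uniform limit of L_pi-formulas in the variables 0 and 1.\<close>

definition definable_fun :: "('h::real_normed_vector \<Rightarrow> 'h) \<Rightarrow> ('g \<Rightarrow> 'h \<Rightarrow> 'h) \<Rightarrow> ('h \<Rightarrow> 'h) \<Rightarrow> bool" where
  "definable_fun J \<pi> T \<longleftrightarrow>
     (\<forall>r::nat. \<exists>s::nat. T ` cball 0 (real r) \<subseteq> cball 0 (real s) \<and>
        (\<forall>\<epsilon>>0. \<exists>\<phi>. wf_fml \<phi> \<and> ffv \<phi> \<subseteq> {0, 1} \<and>
           (\<forall>x\<in>cball 0 (real r). \<forall>y\<in>cball 0 (real s). \<forall>a.
              \<bar>feval J \<pi> (a(0 := x, 1 := y)) \<phi> - dist (T x) y\<bar> < \<epsilon>)))"

inductive_set star_alg :: "('h::real_inner \<Rightarrow> 'h) \<Rightarrow> (nat \<Rightarrow> 'h \<Rightarrow> 'h) \<Rightarrow> ('h \<Rightarrow> 'h) set"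
  for J :: "'h \<Rightarrow> 'h" and U :: "nat \<Rightarrow> 'h \<Rightarrow> 'h" where
  gen: "U n \<in> star_alg J U"
| add: "T \<in> star_alg J U \<Longrightarrow> S \<in> star_alg J U \<Longrightarrow> (\<lambda>x. T x + S x) \<in> star_alg J U"
| scal: "T \<in> star_alg J U \<Longrightarrow> (\<lambda>x. cscale J c (T x)) \<in> star_alg J U"
| comp: "T \<in> star_alg J U \<Longrightarrow> S \<in> star_alg J U \<Longrightarrow> T \<circ> S \<in> star_alg J U"
| adj: "T \<in> star_alg J U \<Longrightarrow> (\<forall>x y. inner (T x) y = inner x (S y)) \<Longrightarrow> S \<in> star_alg J U"

definition cstar_alg :: "('h::real_inner \<Rightarrow> 'h) \<Rightarrow> (nat \<Rightarrow> 'h \<Rightarrow> 'h) \<Rightarrow> ('h \<Rightarrow> 'h) set" where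
  "cstar_alg J U = {T. bounded_linear T \<and>
     (\<forall>\<epsilon>>0. \<exists>S\<in>star_alg J U. onorm (\<lambda>x. T x - S x) < \<epsilon>)}"

end

theory Submission
  imports Defs
begin

text \<open>The axioms saying that the \<open>\<pi>(g)\<close> form a unitary representation commuting with
multiplication by \<open>i\<close> are sentences of \<open>IHS\<^sub>\<pi>\<close>, so every model is again such a
representation. There the \<open>*\<close>-algebra generated by the \<open>\<pi>(g\<^sub>n)\<close> consists of finite sums
\<open>\<Sum> c\<^sub>k \<pi>(h\<^sub>k)\<close>, being closed under adjoints because \<open>\<pi>(h)\<^sup>* = \<pi>(-h)\<close>. Each such sum is
approximated uniformly on balls by an \<open>L\<^sub>\<pi>\<close>-term with dyadic coefficients, hence so is every
norm limit \<open>T\<close> of such sums, and \<open>d(t(x), y)\<close> then approximates \<open>d(T x, y)\<close>.\<close>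

lemma complex_structure_linear: "complex_structure J \<Longrightarrow> linear J"
  by (simp add: complex_structure_def)

lemma complex_structure_J_J: "complex_structure J \<Longrightarrow> J (J x) = - x"
  by (simp add: complex_structure_def)

lemma complex_structure_inner: "complex_structure J \<Longrightarrow> inner (J x) (J y) = inner x y"
  by (simp add: complex_structure_def)

lemma complex_structure_norm: "complex_structure J \<Longrightarrow> norm (J x) = norm x"
  by (simp add: norm_eq_sqrt_inner complex_structure_inner)

lemma complex_structure_inner_left:
  assumes "complex_structure J"
  shows "inner (J x) y = - inner x (J y)"
  using complex_structure_inner[OF assms, of "J x" y] by (simp add: complex_structure_J_J[OF assms])

lemma cscale_one [simp]: "cscale J 1 x = x"
  by (simp add: cscale_def)

lemma cscale_imaginary_unit [simp]: "cscale J \<i> x = J x"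
  by (simp add: cscale_def)

context
  fixes J :: "'h::real_inner \<Rightarrow> 'h"
  assumes J: "complex_structure J"
begin

lemma cscale_zero_right [simp]: "cscale J c 0 = 0"
  using linear_0[OF complex_structure_linear[OF J]] by (simp add: cscale_def)

lemma cscale_add_right: "cscale J c (x + y) = cscale J c x + cscale J c y"
  using linear_add[OF complex_structure_linear[OF J]] by (simp add: cscale_def algebra_simps)

lemma cscale_scaleR_right: "cscale J c (r *\<^sub>R x) = r *\<^sub>R cscale J c x"
  using linear_scale[OF complex_structure_linear[OF J]] by (simp add: cscale_def algebra_simps)

lemma cscale_cscale: "cscale J c (cscale J d x) = cscale J (c * d) x"
  using linear_add[OF complex_structure_linear[OF J]] linear_scale[OF complex_structure_linear[OF J]]
  by (simp add: cscale_def algebra_simps complex_structure_J_J[OF J])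

lemma inner_cscale_left: "inner (cscale J c x) y = inner x (cscale J (cnj c) y)"
  by (simp add: cscale_def inner_add_left inner_add_right inner_diff_right
      complex_structure_inner_left[OF J])

lemma norm_cscale_le: "norm (cscale J c x) \<le> (\<bar>Re c\<bar> + \<bar>Im c\<bar>) * norm x"
proof -
  have "norm (cscale J c x) \<le> norm (Re c *\<^sub>R x) + norm (Im c *\<^sub>R J x)"
    unfolding cscale_def by (rule norm_triangle_ineq)
  then show ?thesis
    by (simp add: complex_structure_norm[OF J] algebra_simps)
qed

end

section \<open>Models of the theory of a unitary representation\<close>

lemma models_theory_of_transfer:
  assumes M: "models_theory_of J \<pi> J0 \<pi>0" and wf: "wf_fml \<phi>" and fv: "ffv \<phi> \<subseteq> {0, 1}"
    and zero: "\<forall>a0. feval J0 \<pi>0 a0 \<phi> = 0"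
  shows "feval J \<pi> a \<phi> = 0"
proof -
  define r where "r = nat \<lceil>max (norm (a 0)) (norm (a 1))\<rceil>"
  define f :: "real \<Rightarrow> real" where "f t = min 1 \<bar>t\<bar>" for t
  \<comment> \<open>\<open>\<psi>\<close> closes \<open>\<phi>\<close> universally over a ball containing \<open>a 0\<close> and \<open>a 1\<close>;
    the truncation \<open>f\<close> keeps the suprema bounded.\<close>
  define \<psi> where "\<psi> = SupB 0 r (SupB 1 r (Conn1 f \<phi>))"
  have "continuous_on UNIV f"
    unfolding f_def by (intro continuous_intros)
  then have "sentence \<psi>"
    using wf fv by (auto simp: sentence_def \<psi>_def)
  moreover have "\<forall>a0. feval J0 \<pi>0 a0 \<psi> = 0"
    using zero by (simp add: \<psi>_def f_def)
  ultimately have \<psi>_zero: "feval J \<pi> a \<psi> = 0"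
    using M by (auto simp: models_theory_of_def)
  define G where "G x y = f (feval J \<pi> (a(0 := x, 1 := y)) \<phi>)" for x y
  have G_bounds: "0 \<le> G x y" "G x y \<le> 1" for x y
    by (auto simp: G_def f_def)
  have a_in_ball: "a 0 \<in> cball 0 (real r)" "a 1 \<in> cball 0 (real r)"
    using real_nat_ceiling_ge[of "max (norm (a 0)) (norm (a 1))"] by (auto simp: r_def)
  have "G (a 0) (a 1) \<le> (SUP y\<in>cball 0 (real r). G (a 0) y)"
    using a_in_ball G_bounds by (intro cSUP_upper bdd_aboveI2[where M = 1]) auto
  also have "\<dots> \<le> (SUP x\<in>cball 0 (real r). SUP y\<in>cball 0 (real r). G x y)"
    using a_in_ball G_bounds by (intro cSUP_upper bdd_aboveI2[where M = 1] cSUP_least) auto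
  also have "\<dots> = 0"
    using \<psi>_zero by (simp add: \<psi>_def G_def)
  finally show ?thesis
    by (simp add: G_def f_def)
qed

lemma cscale_quarter_turn: "cscale J (cis (2 * pi * real_of_rat (1/4))) x = J x"
proof -
  have "2 * pi * real_of_rat (1/4) = pi / 2"
    by (simp add: of_rat_divide)
  then show ?thesis
    by (metis cis_pi_half cscale_imaginary_unit)
qed

lemma unitary_rep_if_models_theory_of:
  fixes J0 :: "'a::real_normed_vector \<Rightarrow> 'a" and \<pi>0 :: "'g::group_add \<Rightarrow> 'a \<Rightarrow> 'a"
    and J :: "'b::real_inner \<Rightarrow> 'b" and \<pi> :: "'g \<Rightarrow> 'b \<Rightarrow> 'b"
  assumes M: "models_theory_of J \<pi> J0 \<pi>0" and U: "unitary_rep J0 \<pi>0"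
  shows "unitary_rep J \<pi>"
proof -
  have U_zero: "\<pi>0 0 = id" and U_add: "\<And>a b. \<pi>0 (a + b) = \<pi>0 a \<circ> \<pi>0 b"
    and U_linear: "\<And>h. linear (\<pi>0 h)" and U_J: "\<And>h x. \<pi>0 h (J0 x) = J0 (\<pi>0 h x)"
    and U_norm: "\<And>h x. norm (\<pi>0 h x) = norm x"
    using U by (auto simp: unitary_rep_def)
  have minus: "continuous_on UNIV (\<lambda>p::real \<times> real. fst p - snd p)"
    by (intro continuous_intros)
  let ?a = "\<lambda>x y. (\<lambda>_. x)(1 := y)"
  have zero: "\<pi> 0 x = x" for x
    using models_theory_of_transfer[OF M, of "Dist (Act 0 (Var 0)) (Var 0)" "?a x x"] U_zero
    by simp
  have add: "\<pi> (h + k) x = \<pi> h (\<pi> k x)" for h k x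
    using models_theory_of_transfer[OF M, of "Dist (Act (h + k) (Var 0)) (Act h (Act k (Var 0)))" "?a x x"]
      U_add by simp
  have J_comm: "\<pi> h (J x) = J (\<pi> h x)" for h x
    using models_theory_of_transfer[OF M,
        of "Dist (Act h (Rot (1/4) (Var 0))) (Rot (1/4) (Act h (Var 0)))" "?a x x"] U_J
    by (simp add: cscale_quarter_turn)
  have fixes_zero: "\<pi> h 0 = 0" for h
    using models_theory_of_transfer[OF M, of "Dist (Act h Zero) Zero" "?a 0 0"]
      linear_0[OF U_linear] by simp
  have isometric: "dist (\<pi> h x) (\<pi> h y) = dist x y" for h x y
    using models_theory_of_transfer[OF M,
        of "Conn2 (\<lambda>u v. u - v) (Dist (Act h (Var 0)) (Act h (Var 1))) (Dist (Var 0) (Var 1))" "?a x y"]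
      minus U_norm U_linear by (simp add: dist_norm linear_diff[symmetric])
  \<comment> \<open>Real homogeneity is not expressible by a sentence, but an isometry fixing 0 is linear.\<close>
  have linear: "linear (\<pi> h)" for h
    using isometry_linear fixes_zero isometric by blast
  have "surj (\<pi> h)" for h
    by (metis add zero ab_left_minus surjI)
  moreover have "norm (\<pi> h x) = norm x" for h x
    using isometric[of h x 0] fixes_zero by simp
  ultimately show ?thesis
    using zero add J_comm linear by (auto simp: unitary_rep_def)
qed

section \<open>Approximation by terms\<close>

fun halve_trm :: "nat \<Rightarrow> 'g trm \<Rightarrow> 'g trm" where
  "halve_trm 0 t = t"
| "halve_trm (Suc k) t = Mid (halve_trm k t) Zero"

fun nat_mult_trm :: "nat \<Rightarrow> 'g trm \<Rightarrow> 'g trm" where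
  "nat_mult_trm 0 t = Zero"
| "nat_mult_trm (Suc n) t = Dbl (Mid t (nat_mult_trm n t))"

definition dyadic_trm :: "int \<Rightarrow> nat \<Rightarrow> 'g trm \<Rightarrow> 'g trm" where
  "dyadic_trm m k t =
     (let u = nat_mult_trm (nat \<bar>m\<bar>) (halve_trm k t) in if 0 \<le> m then u else Neg u)"

lemma teval_halve_trm: "teval J \<pi> a (halve_trm k t) = (1 / 2 ^ k) *\<^sub>R teval J \<pi> a t"
  by (induction k) auto

lemma teval_nat_mult_trm: "teval J \<pi> a (nat_mult_trm n t) = real n *\<^sub>R teval J \<pi> a t"
  by (induction n) (auto simp: algebra_simps)

lemma teval_dyadic_trm: "teval J \<pi> a (dyadic_trm m k t) = (of_int m / 2 ^ k) *\<^sub>R teval J \<pi> a t"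
  by (simp add: dyadic_trm_def Let_def teval_nat_mult_trm teval_halve_trm)

lemma tfv_halve_trm: "tfv (halve_trm k t) = tfv t"
  by (induction k) auto

lemma tfv_nat_mult_trm: "tfv (nat_mult_trm n t) \<subseteq> tfv t"
  by (induction n) auto

lemma tfv_dyadic_trm: "tfv (dyadic_trm m k t) \<subseteq> tfv t"
proof -
  have "tfv (nat_mult_trm n (halve_trm k t)) \<subseteq> tfv t" for n
    by (metis tfv_nat_mult_trm tfv_halve_trm)
  then show ?thesis
    by (simp add: dyadic_trm_def Let_def)
qed

lemma dyadic_approx:
  fixes x :: real
  assumes "\<epsilon> > 0"
  shows "\<exists>m k. \<bar>x - of_int m / 2 ^ k\<bar> < \<epsilon>"
proof -
  obtain k where k: "(1/2::real) ^ k < \<epsilon>"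
    using real_arch_pow_inv[of \<epsilon> "1/2"] assms by auto
  define m where "m = \<lfloor>x * 2 ^ k\<rfloor>"
  define d where "d = x * 2 ^ k - of_int m"
  have "0 \<le> d" "d < 1"
    unfolding d_def m_def by linarith+
  moreover have "x - of_int m / 2 ^ k = d / 2 ^ k"
    by (simp add: d_def field_simps)
  ultimately have "\<bar>x - of_int m / 2 ^ k\<bar> < 1 / 2 ^ k"
    by (simp add: divide_strict_right_mono)
  then show ?thesis
    using k by (metis power_one_over order.strict_trans)
qed

definition term_approximable ::
  "('h::real_normed_vector \<Rightarrow> 'h) \<Rightarrow> ('g \<Rightarrow> 'h \<Rightarrow> 'h) \<Rightarrow> ('h \<Rightarrow> 'h) \<Rightarrow> bool" where
  "term_approximable J \<pi> T \<longleftrightarrow>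
     (\<forall>R \<epsilon>. \<epsilon> > 0 \<longrightarrow> (\<exists>t. tfv t \<subseteq> {0} \<and>
        (\<forall>a. norm (a 0) \<le> R \<longrightarrow> norm (T (a 0) - teval J \<pi> a t) < \<epsilon>)))"

lemma term_approximableD:
  "term_approximable J \<pi> T \<Longrightarrow> \<epsilon> > 0 \<Longrightarrow>
    \<exists>t. tfv t \<subseteq> {0} \<and> (\<forall>a. norm (a 0) \<le> R \<longrightarrow> norm (T (a 0) - teval J \<pi> a t) < \<epsilon>)"
  by (simp add: term_approximable_def)

lemma term_approximable_zero: "term_approximable J \<pi> (\<lambda>x. 0)"
  unfolding term_approximable_def by (auto intro: exI[of _ Zero])

lemma term_approximable_add:
  assumes S: "term_approximable J \<pi> S" and T: "term_approximable J \<pi> T"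
  shows "term_approximable J \<pi> (\<lambda>x. S x + T x)"
  unfolding term_approximable_def
proof (intro allI impI)
  fix R \<epsilon> :: real
  assume "\<epsilon> > 0"
  then obtain s t where "tfv s \<subseteq> {0}" "tfv t \<subseteq> {0}"
    and s: "\<And>a. norm (a 0) \<le> R \<Longrightarrow> norm (S (a 0) - teval J \<pi> a s) < \<epsilon> / 2"
    and t: "\<And>a. norm (a 0) \<le> R \<Longrightarrow> norm (T (a 0) - teval J \<pi> a t) < \<epsilon> / 2"
    using term_approximableD[OF S, of "\<epsilon> / 2" R] term_approximableD[OF T, of "\<epsilon> / 2" R] by auto
  moreover have "norm (S (a 0) + T (a 0) - teval J \<pi> a (Dbl (Mid s t))) < \<epsilon>"
    if "norm (a 0) \<le> R" for a
    using s[of a] t[of a] that norm_triangle_ineq[of "S (a 0) - teval J \<pi> a s" "T (a 0) - teval J \<pi> a t"]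
    by (simp add: algebra_simps)
  ultimately show "\<exists>u. tfv u \<subseteq> {0} \<and>
      (\<forall>a. norm (a 0) \<le> R \<longrightarrow> norm (S (a 0) + T (a 0) - teval J \<pi> a u) < \<epsilon>)"
    by (intro exI[of _ "Dbl (Mid s t)"]) auto
qed

lemma term_approximable_scaleR:
  assumes u: "tfv u \<subseteq> {0}" "\<And>a. teval J \<pi> a u = f (a 0)" and f: "\<And>x. norm (f x) \<le> norm x"
  shows "term_approximable J \<pi> (\<lambda>x. r *\<^sub>R f x)"
  unfolding term_approximable_def
proof (intro allI impI)
  fix R \<epsilon> :: real
  assume "\<epsilon> > 0"
  then obtain m k where mk: "\<bar>r - of_int m / 2 ^ k\<bar> < \<epsilon> / (\<bar>R\<bar> + 1)"
    using dyadic_approx by (metis divide_pos_pos abs_ge_zero add_nonneg_pos zero_less_one)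
  have "norm (r *\<^sub>R f (a 0) - teval J \<pi> a (dyadic_trm m k u)) < \<epsilon>" if "norm (a 0) \<le> R" for a
  proof -
    have "norm (r *\<^sub>R f (a 0) - teval J \<pi> a (dyadic_trm m k u))
        = \<bar>r - of_int m / 2 ^ k\<bar> * norm (f (a 0))"
      by (simp add: teval_dyadic_trm u(2) flip: scaleR_diff_left)
    also have "\<dots> \<le> \<epsilon> / (\<bar>R\<bar> + 1) * \<bar>R\<bar>"
      using mk f[of "a 0"] that by (intro mult_mono) auto
    also have "\<dots> < \<epsilon>"
      using \<open>\<epsilon> > 0\<close> by (simp add: field_simps)
    finally show ?thesis .
  qed
  then show "\<exists>t. tfv t \<subseteq> {0} \<and>
      (\<forall>a. norm (a 0) \<le> R \<longrightarrow> norm (r *\<^sub>R f (a 0) - teval J \<pi> a t) < \<epsilon>)"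
    using u(1) tfv_dyadic_trm[of m k u] by blast
qed

lemma term_approximable_uniform_limit:
  assumes "\<And>R \<epsilon>. \<epsilon> > 0 \<Longrightarrow> \<exists>S. term_approximable J \<pi> S \<and> (\<forall>x. norm x \<le> R \<longrightarrow> norm (T x - S x) < \<epsilon>)"
  shows "term_approximable J \<pi> T"
  unfolding term_approximable_def
proof (intro allI impI)
  fix R \<epsilon> :: real
  assume "\<epsilon> > 0"
  then obtain S where "term_approximable J \<pi> S" and TS: "\<And>x. norm x \<le> R \<Longrightarrow> norm (T x - S x) < \<epsilon> / 2"
    using assms half_gt_zero by blast
  then obtain t where "tfv t \<subseteq> {0}"
    and St: "\<And>a. norm (a 0) \<le> R \<Longrightarrow> norm (S (a 0) - teval J \<pi> a t) < \<epsilon> / 2"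
    using term_approximableD[of J \<pi> S "\<epsilon> / 2" R] \<open>\<epsilon> > 0\<close> by auto
  moreover have "norm (T (a 0) - teval J \<pi> a t) < \<epsilon>" if "norm (a 0) \<le> R" for a
    using TS[of "a 0"] St[of a] that norm_triangle_ineq[of "T (a 0) - S (a 0)" "S (a 0) - teval J \<pi> a t"]
    by simp
  ultimately show "\<exists>t. tfv t \<subseteq> {0} \<and> (\<forall>a. norm (a 0) \<le> R \<longrightarrow> norm (T (a 0) - teval J \<pi> a t) < \<epsilon>)"
    by blast
qed

section \<open>Finite combinations of representation operators\<close>

definition rep_sum :: "('h::real_vector \<Rightarrow> 'h) \<Rightarrow> ('g \<Rightarrow> 'h \<Rightarrow> 'h) \<Rightarrow> (complex \<times> 'g) list \<Rightarrow> 'h \<Rightarrow> 'h"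
  where "rep_sum J \<pi> L x = (\<Sum>(c, h)\<leftarrow>L. cscale J c (\<pi> h x))"

lemma rep_sum_Nil [simp]: "rep_sum J \<pi> [] x = 0"
  by (simp add: rep_sum_def)

lemma rep_sum_Cons [simp]: "rep_sum J \<pi> ((c, h) # L) x = cscale J c (\<pi> h x) + rep_sum J \<pi> L x"
  by (simp add: rep_sum_def)

lemma rep_sum_append: "rep_sum J \<pi> (L1 @ L2) x = rep_sum J \<pi> L1 x + rep_sum J \<pi> L2 x"
  by (simp add: rep_sum_def)

locale complex_unitary_rep =
  fixes J :: "'h::real_inner \<Rightarrow> 'h" and \<pi> :: "'g::group_add \<Rightarrow> 'h \<Rightarrow> 'h"
  assumes complex_structure: "complex_structure J" and unitary_rep: "unitary_rep J \<pi>"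
begin

lemma rep_zero [simp]: "\<pi> 0 x = x"
  using unitary_rep by (simp add: unitary_rep_def)

lemma rep_add: "\<pi> (h + k) x = \<pi> h (\<pi> k x)"
  using unitary_rep by (simp add: unitary_rep_def)

lemma linear_rep: "linear (\<pi> h)"
  using unitary_rep by (simp add: unitary_rep_def)

lemma rep_J: "\<pi> h (J x) = J (\<pi> h x)"
  using unitary_rep by (simp add: unitary_rep_def)

lemma norm_rep [simp]: "norm (\<pi> h x) = norm x"
  using unitary_rep by (simp add: unitary_rep_def)

lemma inner_rep: "inner (\<pi> h x) (\<pi> h y) = inner x y"
  by (simp add: dot_norm_neg linear_diff[OF linear_rep, symmetric])

lemma rep_cscale: "\<pi> h (cscale J c x) = cscale J c (\<pi> h x)"
  by (simp add: cscale_def linear_add[OF linear_rep] linear_scale[OF linear_rep] rep_J)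

lemma rep_sum_single: "rep_sum J \<pi> [(1, h)] = \<pi> h"
  by (simp add: fun_eq_iff)

lemma rep_sum_scale:
  "rep_sum J \<pi> (map (\<lambda>(c, h). (d * c, h)) L) x = cscale J d (rep_sum J \<pi> L x)"
  by (induction L) (auto simp: complex_structure cscale_add_right cscale_cscale)

lemma cscale_rep_rep_sum:
  "cscale J c (\<pi> h (rep_sum J \<pi> L x)) = rep_sum J \<pi> (map (\<lambda>(d, k). (c * d, h + k)) L) x"
  by (induction L) (auto simp: linear_0[OF linear_rep] linear_add[OF linear_rep] complex_structure
      cscale_add_right cscale_cscale rep_cscale rep_add)

lemma rep_sum_comp:
  "rep_sum J \<pi> (concat (map (\<lambda>(c, h). map (\<lambda>(d, k). (c * d, h + k)) L2) L1)) x
     = rep_sum J \<pi> L1 (rep_sum J \<pi> L2 x)"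
  by (induction L1) (auto simp: rep_sum_append cscale_rep_rep_sum)

lemma rep_sum_adjoint:
  "inner (rep_sum J \<pi> L x) y = inner x (rep_sum J \<pi> (map (\<lambda>(c, h). (cnj c, - h)) L) y)"
proof (induction L)
  case Nil
  then show ?case by simp
next
  case (Cons p L)
  obtain c h where p: "p = (c, h)"
    by fastforce
  have "inner (cscale J c (\<pi> h x)) y = inner (\<pi> h x) (\<pi> h (\<pi> (- h) (cscale J (cnj c) y)))"
    by (simp add: inner_cscale_left[OF complex_structure] rep_add[symmetric])
  also have "\<dots> = inner x (cscale J (cnj c) (\<pi> (- h) y))"
    unfolding inner_rep by (simp add: rep_cscale)
  finally show ?case
    using Cons by (simp add: p inner_add_left inner_add_right)
qed

lemma bounded_linear_rep_sum: "bounded_linear (rep_sum J \<pi> L)"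
proof (induction L)
  case Nil
  then show ?case
    using bounded_linear_zero by (simp add: rep_sum_def)
next
  case (Cons p L)
  obtain c h where p: "p = (c, h)"
    by fastforce
  have "bounded_linear (\<lambda>x. cscale J c (\<pi> h x))"
    by (rule bounded_linear_intro[where K = "\<bar>Re c\<bar> + \<bar>Im c\<bar>"])
      (use norm_cscale_le[OF complex_structure, of c "\<pi> h _"] in
        \<open>auto simp: linear_add[OF linear_rep] linear_scale[OF linear_rep] complex_structure
          cscale_add_right cscale_scaleR_right mult.commute\<close>)
  then show ?case
    using Cons by (simp add: p bounded_linear_add)
qed

lemma star_alg_rep_sum:
  "S \<in> star_alg J (\<lambda>n. \<pi> (g n)) \<Longrightarrow> \<exists>L. S = rep_sum J \<pi> L"
proof (induction rule: star_alg.induct)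
  case (gen n)
  then show ?case
    using rep_sum_single by metis
next
  case (add T S)
  then obtain L1 L2 where "T = rep_sum J \<pi> L1" "S = rep_sum J \<pi> L2"
    by blast
  then show ?case
    by (metis rep_sum_append)
next
  case (scal T c)
  then obtain L where "T = rep_sum J \<pi> L"
    by blast
  then show ?case
    by (metis rep_sum_scale)
next
  case (comp T S)
  then obtain L1 L2 where "T = rep_sum J \<pi> L1" "S = rep_sum J \<pi> L2"
    by blast
  then show ?case
    by (metis rep_sum_comp comp_apply)
next
  case (adj T S)
  then obtain L where "T = rep_sum J \<pi> L"
    by blast
  then have "adjoint T = rep_sum J \<pi> (map (\<lambda>(c, h). (cnj c, - h)) L)"
    by (simp add: adjoint_unique rep_sum_adjoint)
  moreover have "adjoint T = S"
    using adj.hyps(2) by (rule adjoint_unique)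
  ultimately show ?case
    by metis
qed

lemma term_approximable_cscale_rep: "term_approximable J \<pi> (\<lambda>x. cscale J c (\<pi> h x))"
proof -
  have "term_approximable J \<pi> (\<lambda>x. Re c *\<^sub>R \<pi> h x)"
    by (rule term_approximable_scaleR[where u = "Act h (Var 0)"]) auto
  moreover have "term_approximable J \<pi> (\<lambda>x. Im c *\<^sub>R J (\<pi> h x))"
    by (rule term_approximable_scaleR[where u = "Rot (1/4) (Act h (Var 0))"])
      (auto simp: cscale_quarter_turn complex_structure_norm[OF complex_structure])
  ultimately show ?thesis
    unfolding cscale_def by (rule term_approximable_add)
qed

lemma term_approximable_rep_sum: "term_approximable J \<pi> (rep_sum J \<pi> L)"
proof (induction L)
  case Nil
  then show ?case
    using term_approximable_zero by (simp add: rep_sum_def)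
next
  case (Cons p L)
  then show ?case
    using term_approximable_add[OF term_approximable_cscale_rep]
    by (cases p) (simp add: rep_sum_Cons[abs_def])
qed

lemma cstar_alg_term_approximable:
  assumes "T \<in> cstar_alg J (\<lambda>n. \<pi> (g n))"
  shows "term_approximable J \<pi> T"
proof (rule term_approximable_uniform_limit)
  fix R \<epsilon> :: real
  assume "\<epsilon> > 0"
  then have "\<epsilon> / (\<bar>R\<bar> + 1) > 0"
    by simp
  then obtain S where "S \<in> star_alg J (\<lambda>n. \<pi> (g n))"
    and S: "onorm (\<lambda>x. T x - S x) < \<epsilon> / (\<bar>R\<bar> + 1)"
    using assms unfolding cstar_alg_def by blast
  then obtain L where L: "S = rep_sum J \<pi> L"
    using star_alg_rep_sum by blast
  have bounded: "bounded_linear (\<lambda>x. T x - S x)"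
    using assms bounded_linear_rep_sum unfolding cstar_alg_def L by (blast intro: bounded_linear_sub)
  have "norm (T x - S x) < \<epsilon>" if "norm x \<le> R" for x
  proof -
    have "norm (T x - S x) \<le> onorm (\<lambda>x. T x - S x) * norm x"
      using onorm[OF bounded] by simp
    also have "\<dots> \<le> \<epsilon> / (\<bar>R\<bar> + 1) * \<bar>R\<bar>"
      using S that onorm_pos_le[OF bounded] by (intro mult_mono) auto
    also have "\<dots> < \<epsilon>"
      using \<open>\<epsilon> > 0\<close> by (simp add: field_simps)
    finally show ?thesis .
  qed
  then show "\<exists>S. term_approximable J \<pi> S \<and> (\<forall>x. norm x \<le> R \<longrightarrow> norm (T x - S x) < \<epsilon>)"
    using L term_approximable_rep_sum by blast
qed

end

lemma definable_fun_if_term_approximable: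
  assumes T: "bounded_linear T" and approx: "term_approximable J \<pi> T"
  shows "definable_fun J \<pi> T"
  unfolding definable_fun_def
proof (intro allI)
  fix r :: nat
  define s where "s = nat \<lceil>onorm T * real r\<rceil>"
  have "T ` cball 0 (real r) \<subseteq> cball 0 (real s)"
  proof clarsimp
    fix x :: 'a
    assume "norm x \<le> real r"
    have "norm (T x) \<le> onorm T * norm x"
      by (rule onorm[OF T])
    also have "\<dots> \<le> onorm T * real r"
      using \<open>norm x \<le> real r\<close> onorm_pos_le[OF T] by (rule mult_left_mono)
    also have "\<dots> \<le> real s"
      unfolding s_def by (rule real_nat_ceiling_ge)
    finally show "norm (T x) \<le> real s" .
  qed
  moreover have "\<exists>\<phi>. wf_fml \<phi> \<and> ffv \<phi> \<subseteq> {0, 1} \<and>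
      (\<forall>x\<in>cball 0 (real r). \<forall>y\<in>cball 0 (real s). \<forall>a.
         \<bar>feval J \<pi> (a(0 := x, 1 := y)) \<phi> - dist (T x) y\<bar> < \<epsilon>)" if "\<epsilon> > 0" for \<epsilon>
  proof -
    obtain t where t: "tfv t \<subseteq> {0}"
      and close: "\<And>a. norm (a 0) \<le> real r \<Longrightarrow> norm (T (a 0) - teval J \<pi> a t) < \<epsilon>"
      using term_approximableD[OF approx \<open>\<epsilon> > 0\<close>, of "real r"] by blast
    have "\<bar>feval J \<pi> (a(0 := x, 1 := y)) (Dist t (Var 1)) - dist (T x) y\<bar> < \<epsilon>"
      if "norm x \<le> real r" for x y a
    proof -
      let ?u = "teval J \<pi> (a(0 := x, 1 := y)) t"
      have "\<bar>feval J \<pi> (a(0 := x, 1 := y)) (Dist t (Var 1)) - dist (T x) y\<bar>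
          = \<bar>dist ?u y - dist y (T x)\<bar>"
        by (simp add: dist_commute[of y])
      also have "\<dots> \<le> dist ?u (T x)"
        by (rule abs_dist_diff_le)
      also have "\<dots> = norm (T x - ?u)"
        by (metis dist_commute dist_norm)
      also have "\<dots> < \<epsilon>"
        using close[of "a(0 := x, 1 := y)"] that by simp
      finally show ?thesis .
    qed
    then show ?thesis
      using t by (intro exI[of _ "Dist t (Var 1)"]) auto
  qed
  ultimately show "\<exists>s::nat. T ` cball 0 (real r) \<subseteq> cball 0 (real s) \<and>
      (\<forall>\<epsilon>>0. \<exists>\<phi>. wf_fml \<phi> \<and> ffv \<phi> \<subseteq> {0, 1} \<and>
         (\<forall>x\<in>cball 0 (real r). \<forall>y\<in>cball 0 (real s). \<forall>a.
            \<bar>feval J \<pi> (a(0 := x, 1 := y)) \<phi> - dist (T x) y\<bar> < \<epsilon>))"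
    by (intro exI[of _ s] conjI allI impI)
qed

theorem mainTheorem18:
  fixes g :: "nat \<Rightarrow> 'g::{group_add, countable}"
    and J0 :: "'a::{real_inner, complete_space} \<Rightarrow> 'a" and \<pi>0 :: "'g \<Rightarrow> 'a \<Rightarrow> 'a"
    and J :: "'b::{real_inner, complete_space} \<Rightarrow> 'b" and \<pi> :: "'g \<Rightarrow> 'b \<Rightarrow> 'b"
    and T :: "'b \<Rightarrow> 'b"
  assumes "infinite (UNIV :: 'g set)"
    and "bij g"
    and "complex_structure J0"
    and "infinite_dimensional TYPE('a)"
    and "unitary_rep J0 \<pi>0"
    and "complex_structure J"
    and "models_theory_of J \<pi> J0 \<pi>0"
    and "T \<in> cstar_alg J (\<lambda>n. \<pi> (g n))"
  shows "definable_fun J \<pi> T"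
proof -
  have "unitary_rep J \<pi>"
    using assms(7,5) by (rule unitary_rep_if_models_theory_of)
  then interpret complex_unitary_rep J \<pi>
    using assms(6) by unfold_locales
  have "bounded_linear T"
    using assms(8) by (simp add: cstar_alg_def)
  moreover have "term_approximable J \<pi> T"
    using assms(8) by (rule cstar_alg_term_approximable)
  ultimately show ?thesis
    by (rule definable_fun_if_term_approximable)
qed

end
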